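(* Let $\boldsymbol{\beta}\in\mathbb{R}^q$ be fixed, let $\boldsymbol{x}_1,\dots,\boldsymbol{x}_r$ be fixed covariate vectors, and let $h(\boldsymbol{x},\boldsymbol{\beta})\in(0,1)$ be a known function differentiable in $\boldsymbol{\beta}$, with gradient $\nabla_{\boldsymbol{\beta}}h(\boldsymbol{x},\boldsymbol{\beta})$ (a column vector). For $\mu>0$ define the $(q+1)\times(q+1)$ Fisher information matrix $$I_r(\boldsymbol{\beta},\mu)=\begin{bmatrix}\sum_{i=1}^r\frac{\mu\,\nabla_{\boldsymbol{\beta}}h(\boldsymbol{x}_i,\boldsymbol{\beta})\nabla_{\boldsymbol{\beta}}'h(\boldsymbol{x}_i,\boldsymbol{\beta})}{h(\boldsymbol{x}_i,\boldsymbol{\beta})} & \sum_{i=1}^r\nabla_{\boldsymbol{\beta}}h(\boldsymbol{x}_i,\boldsymbol{\beta})\\ \sum_{i=1}^r\nabla_{\boldsymbol{\beta}}'h(\boldsymbol{x}_i,\boldsymbol{\beta}) & \sum_{i=1}^r\frac{h(\boldsymbol{x}_i,\boldsymbol{\beta})}{\mu}\end{bmatrix},$$ and suppose it is nonsingular, with inverse $V=V(\mu)$ (the asymptotic variance-covariance matrix of the MLE of $(\boldsymbol{\beta},\mu)$). Then, with $\boldsymbol{\beta}$ and the $\boldsymbol{x}_i$ held fixed, each of the first $q$ diagonal entries of $V(\mu)$ (the asymptotic variances of the components of $\hat{\boldsymbol{\beta}}$) is a nonincreasing function of $\mu\in(0,\infty)$, while the last diagonal entry of $V(\mu)$ (the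 asymptotic variance of $\hat\mu$) is a nondecreasing function of $\mu\in(0,\infty)$.
   Context: Model: observations $y_i\sim\mathrm{Bin}(n_i,p_i)$, $i=1,\dots,r$, independent, with $p_i=h(\boldsymbol{x}_i,\boldsymbol{\beta})$ for a known link-type function $h$, where the sizes $n_i$ are unknown and are independent Poisson random variables with common mean $\mu$; hence marginally $y_i\sim\mathrm{Poisson}(\mu h(\boldsymbol{x}_i,\boldsymbol{\beta}))$, and $I_r(\boldsymbol{\beta},\mu)$ above is the Fisher information matrix for $(\boldsymbol{\beta},\mu)$ in this model. The prime denotes transpose. *)

theory Defs
  imports "HOL-Analysis.Analysis"
begin

definition grad :: "(real^'q \<Rightarrow> real) \<Rightarrow> real^'q \<Rightarrow> real^'q" where
  "grad f b = (THE D. GDERIV f b :> D)"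

text \<open>Indices are 'q option: Some j (j :: 'q) are the beta-coordinates, None is the last (mu) coordinate.\<close>
definition fisher_info ::
  "('x \<Rightarrow> real^'q \<Rightarrow> real) \<Rightarrow> (nat \<Rightarrow> 'x) \<Rightarrow> nat \<Rightarrow> real^'q \<Rightarrow> real
     \<Rightarrow> real^('q option)^('q option)" where
  "fisher_info h xs r \<beta> \<mu> = (\<chi> a c.
     (case (a, c) of
        (Some j, Some k) \<Rightarrow> (\<Sum>i=1..r. \<mu> * (grad (h (xs i)) \<beta> $ j) * (grad (h (xs i)) \<beta> $ k) / h (xs i) \<beta>)
      | (Some j, None) \<Rightarrow> (\<Sum>i=1..r. grad (h (xs i)) \<beta> $ j)
      | (None, Some k) \<Rightarrow> (\<Sum>i=1..r. grad (h (xs i)) \<beta> $ k)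
      | (None, None) \<Rightarrow> (\<Sum>i=1..r. h (xs i) \<beta> / \<mu>)))"

end

theory Submission
  imports Defs
begin

text \<open>Write \<open>\<lambda>\<^sub>i = \<mu> h(x\<^sub>i, \<beta>)\<close> for the Poisson means. Then \<open>I\<^sub>r(\<beta>, \<mu>) = \<Sum>\<^sub>i \<nabla>\<lambda>\<^sub>i \<nabla>'\<lambda>\<^sub>i / \<lambda>\<^sub>i\<close>, the gradient
  taken in \<open>(\<beta>, \<mu>)\<close>, so the information matrix is positive semidefinite, and then so is its
  inverse; in particular the diagonal of \<open>V(1)\<close> is nonnegative. Moreover
  \<open>I\<^sub>r(\<beta>, \<mu>) = \<mu> D I\<^sub>r(\<beta>, 1) D\<close> with \<open>D = diag(1, \<dots>, 1, 1/\<mu>)\<close>, hence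
  \<open>V(\<mu>) = \<mu>\<^sup>-\<^sup>1 D\<^sup>-\<^sup>1 V(1) D\<^sup>-\<^sup>1\<close>: the first \<open>q\<close> diagonal entries of \<open>V(\<mu>)\<close> are those of \<open>V(1)\<close>
  divided by \<open>\<mu>\<close>, the last one is that of \<open>V(1)\<close> multiplied by \<open>\<mu>\<close>.\<close>

lemma matrix_inv_inverse:
  fixes A :: "real^'n^'n"
  assumes "invertible A"
  shows "A ** matrix_inv A = mat 1" and "matrix_inv A ** A = mat 1"
  using someI_ex[OF assms[unfolded invertible_def]] by (simp_all add: matrix_inv_def)

lemma matrix_inv_unique:
  fixes A :: "real^'n^'n"
  assumes AB: "A ** B = mat 1" and BA: "B ** A = mat 1"
  shows "matrix_inv A = B"
proof -
  have "invertible A" using AB BA unfolding invertible_def by blast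
  then have "matrix_inv A = matrix_inv A ** (A ** B)"
    by (simp add: AB)
  also have "\<dots> = B"
    by (simp add: matrix_mul_assoc matrix_inv_inverse \<open>invertible A\<close>)
  finally show ?thesis .
qed

text \<open>No symmetry is needed: for \<open>y = A\<^sup>-\<^sup>1 e\<^sub>a\<close> the quadratic form \<open>y' A y\<close> equals \<open>y' e\<^sub>a\<close>.\<close>
lemma matrix_inv_diagonal_nonneg:
  fixes A :: "real^'n^'n"
  assumes "invertible A" and psd: "\<And>x. 0 \<le> x \<bullet> (A *v x)"
  shows "0 \<le> matrix_inv A $ a $ a"
proof -
  define y where "y = matrix_inv A *v axis a 1"
  have "A *v y = axis a 1"
    by (simp add: y_def matrix_vector_mul_assoc matrix_inv_inverse \<open>invertible A\<close>)
  then have "y \<bullet> (A *v y) = y $ a"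
    by (simp add: inner_axis)
  also have "\<dots> = matrix_inv A $ a $ a"
    by (simp add: y_def matrix_vector_mult_basis column_def)
  finally show ?thesis using psd[of y] by simp
qed

lemma matrix_inv_diagonal_congruence:
  fixes A :: "real^'n^'n"
  assumes "invertible A" and "c \<noteq> 0" and d: "\<And>a. d a \<noteq> 0"
  shows "matrix_inv (\<chi> a b. c * d a * A $ a $ b * d b)
       = (\<chi> a b. matrix_inv A $ a $ b / (c * d a * d b))"
proof (rule matrix_inv_unique)
  let ?S = "\<chi> a b. c * d a * A $ a $ b * d b"
    and ?T = "\<chi> a b. matrix_inv A $ a $ b / (c * d a * d b)"
  have "(?S ** ?T) $ a $ e = d a / d e * (A ** matrix_inv A) $ a $ e" for a e
    unfolding matrix_matrix_mult_def using \<open>c \<noteq> 0\<close> d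
    by (simp add: sum_distrib_left sum_divide_distrib)
  then show "?S ** ?T = mat 1"
    using d by (simp add: vec_eq_iff matrix_inv_inverse \<open>invertible A\<close> mat_def)
  have "(?T ** ?S) $ a $ e = d e / d a * (matrix_inv A ** A) $ a $ e" for a e
    unfolding matrix_matrix_mult_def using \<open>c \<noteq> 0\<close> d
    by (simp add: sum_distrib_left sum_divide_distrib mult_ac)
  then show "?T ** ?S = mat 1"
    using d by (simp add: vec_eq_iff matrix_inv_inverse \<open>invertible A\<close> mat_def)
qed

lemma weighted_gram_matrix_nonneg:
  fixes v :: "'i \<Rightarrow> real^'n" and w :: "'i \<Rightarrow> real"
  assumes "\<And>i. i \<in> S \<Longrightarrow> 0 < w i"
  shows "0 \<le> x \<bullet> ((\<chi> a b. \<Sum>i\<in>S. v i $ a * v i $ b / w i) *v x)"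
proof -
  have "x \<bullet> ((\<chi> a b. \<Sum>i\<in>S. v i $ a * v i $ b / w i) *v x)
      = (\<Sum>a\<in>UNIV. \<Sum>b\<in>UNIV. \<Sum>i\<in>S. (x $ a * v i $ a) * (v i $ b * x $ b) / w i)"
    by (simp add: inner_vec_def matrix_vector_mult_def sum_distrib_left sum_distrib_right
        mult_ac)
  also have "\<dots> = (\<Sum>i\<in>S. \<Sum>a\<in>UNIV. \<Sum>b\<in>UNIV. (x $ a * v i $ a) * (v i $ b * x $ b) / w i)"
    by (subst sum.swap) (rule sum.cong[OF refl], rule sum.swap)
  also have "\<dots> = (\<Sum>i\<in>S. (v i \<bullet> x)\<^sup>2 / w i)"
    by (simp add: inner_vec_def power2_eq_square sum_product sum_divide_distrib mult_ac)
  also have "\<dots> \<ge> 0"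
    using assms by (intro sum_nonneg divide_nonneg_pos) auto
  finally show ?thesis .
qed

definition poisson_mean_grad ::
  "('x \<Rightarrow> real^'q \<Rightarrow> real) \<Rightarrow> (nat \<Rightarrow> 'x) \<Rightarrow> real^'q \<Rightarrow> real \<Rightarrow> nat \<Rightarrow> real^('q option)" where
  "poisson_mean_grad h xs \<beta> \<mu> i =
     (\<chi> a. case a of Some j \<Rightarrow> \<mu> * grad (h (xs i)) \<beta> $ j | None \<Rightarrow> h (xs i) \<beta>)"

lemma fisher_info_eq_gram:
  assumes "\<mu> \<noteq> 0" and "\<And>i. h (xs i) \<beta> \<noteq> 0"
  shows "fisher_info h xs r \<beta> \<mu> = (\<chi> a b. \<Sum>i\<in>{1..r}.
           poisson_mean_grad h xs \<beta> \<mu> i $ a * poisson_mean_grad h xs \<beta> \<mu> i $ b / (\<mu> * h (xs i) \<beta>))"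
proof -
  have "fisher_info h xs r \<beta> \<mu> $ a $ b = (\<Sum>i\<in>{1..r}.
      poisson_mean_grad h xs \<beta> \<mu> i $ a * poisson_mean_grad h xs \<beta> \<mu> i $ b / (\<mu> * h (xs i) \<beta>))"
    for a b
    using assms by (cases a; cases b)
      (auto simp: fisher_info_def poisson_mean_grad_def intro!: sum.cong)
  then show ?thesis by (simp add: vec_eq_iff)
qed

lemma fisher_info_nonneg:
  assumes "0 < \<mu>" and "\<And>i. 0 < h (xs i) \<beta>"
  shows "0 \<le> x \<bullet> (fisher_info h xs r \<beta> \<mu> *v x)"
proof -
  have "fisher_info h xs r \<beta> \<mu> = (\<chi> a b. \<Sum>i\<in>{1..r}.
           poisson_mean_grad h xs \<beta> \<mu> i $ a * poisson_mean_grad h xs \<beta> \<mu> i $ b / (\<mu> * h (xs i) \<beta>))"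
    using assms by (intro fisher_info_eq_gram) (simp_all add: order_less_imp_not_eq2)
  then show ?thesis
    using assms by (simp add: weighted_gram_matrix_nonneg)
qed

definition mu_scale :: "real \<Rightarrow> 'q option \<Rightarrow> real" where
  "mu_scale \<mu> a = (case a of Some _ \<Rightarrow> 1 | None \<Rightarrow> 1 / \<mu>)"

lemma fisher_info_scaling:
  assumes "\<mu> \<noteq> 0"
  shows "fisher_info h xs r \<beta> \<mu>
       = (\<chi> a b. \<mu> * mu_scale \<mu> a * fisher_info h xs r \<beta> 1 $ a $ b * mu_scale \<mu> b)"
proof -
  have "fisher_info h xs r \<beta> \<mu> $ a $ b
      = \<mu> * mu_scale \<mu> a * fisher_info h xs r \<beta> 1 $ a $ b * mu_scale \<mu> b" for a b
    using assms by (cases a; cases b)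
      (simp_all add: fisher_info_def mu_scale_def sum_distrib_left sum_divide_distrib mult.assoc)
  then show ?thesis by (simp add: vec_eq_iff)
qed

lemma matrix_inv_fisher_info_diagonal:
  assumes "0 < \<mu>" and "invertible (fisher_info h xs r \<beta> 1)"
  shows "matrix_inv (fisher_info h xs r \<beta> \<mu>) $ Some j $ Some j
           = matrix_inv (fisher_info h xs r \<beta> 1) $ Some j $ Some j / \<mu>"
    and "matrix_inv (fisher_info h xs r \<beta> \<mu>) $ None $ None
           = \<mu> * matrix_inv (fisher_info h xs r \<beta> 1) $ None $ None"
proof -
  have "\<mu> \<noteq> 0" using assms by simp
  moreover have "mu_scale \<mu> a \<noteq> 0" for a
    using assms by (simp add: mu_scale_def split: option.split)
  ultimately have "matrix_inv (fisher_info h xs r \<beta> \<mu>) = (\<chi> a b.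
      matrix_inv (fisher_info h xs r \<beta> 1) $ a $ b / (\<mu> * mu_scale \<mu> a * mu_scale \<mu> b))"
    unfolding fisher_info_scaling[OF \<open>\<mu> \<noteq> 0\<close>]
    by (intro matrix_inv_diagonal_congruence assms(2))
  then show "matrix_inv (fisher_info h xs r \<beta> \<mu>) $ Some j $ Some j
           = matrix_inv (fisher_info h xs r \<beta> 1) $ Some j $ Some j / \<mu>"
    and "matrix_inv (fisher_info h xs r \<beta> \<mu>) $ None $ None
           = \<mu> * matrix_inv (fisher_info h xs r \<beta> 1) $ None $ None"
    using assms by (simp_all add: mu_scale_def)
qed

theorem mainTheorem1:
  fixes h :: "'x \<Rightarrow> real^'q \<Rightarrow> real" and xs :: "nat \<Rightarrow> 'x" and r :: nat and \<beta> :: "real^'q"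
  assumes h_range: "\<And>x b. 0 < h x b \<and> h x b < 1"
    and h_diff: "\<And>x b. h x differentiable (at b)"
    and nonsing: "\<And>\<mu>. \<mu> > 0 \<Longrightarrow> invertible (fisher_info h xs r \<beta> \<mu>)"
  shows "(\<forall>j::'q. antimono_on {0<..}
            (\<lambda>\<mu>. matrix_inv (fisher_info h xs r \<beta> \<mu>) $ Some j $ Some j))
       \<and> mono_on {0<..} (\<lambda>\<mu>. matrix_inv (fisher_info h xs r \<beta> \<mu>) $ None $ None)"
proof -
  let ?V = "\<lambda>\<mu>. matrix_inv (fisher_info h xs r \<beta> \<mu>)"
  have inv1: "invertible (fisher_info h xs r \<beta> 1)" by (rule nonsing) simp
  have diag_nonneg: "0 \<le> ?V 1 $ a $ a" for a
    using inv1 fisher_info_nonneg[of 1 h xs \<beta>] h_range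
    by (intro matrix_inv_diagonal_nonneg) auto
  note V_diagonal = matrix_inv_fisher_info_diagonal[OF _ inv1]
  have "antimono_on {0<..} (\<lambda>\<mu>. ?V \<mu> $ Some j $ Some j)" for j
  proof (rule monotone_onI)
    fix \<mu> \<nu> :: real
    assume "\<mu> \<in> {0<..}" "\<nu> \<in> {0<..}" "\<mu> \<le> \<nu>"
    then show "?V \<nu> $ Some j $ Some j \<le> ?V \<mu> $ Some j $ Some j"
      using diag_nonneg[of "Some j"]
      by (simp add: V_diagonal(1)[of \<mu>] V_diagonal(1)[of \<nu>] divide_left_mono)
  qed
  moreover have "mono_on {0<..} (\<lambda>\<mu>. ?V \<mu> $ None $ None)"
  proof (rule mono_onI)
    fix \<mu> \<nu> :: real
    assume "\<mu> \<in> {0<..}" "\<nu> \<in> {0<..}" "\<mu> \<le> \<nu>"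
    then show "?V \<mu> $ None $ None \<le> ?V \<nu> $ None $ None"
      using diag_nonneg[of None]
      by (simp add: V_diagonal(2)[of \<mu>] V_diagonal(2)[of \<nu>] mult_right_mono)
  qed
  ultimately show ?thesis by blast
qed

end
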